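(* Let $\mathcal D$ be universal, $\mathrm M=(M,d)\in\mathfrak U_{\mathcal D}$, and $r\in\mathcal D$, $r>0$, with $(r,2r]\cap\mathcal D=\emptyset$. Then for any three $\sim_r$-equivalence classes $A,B,C$ of $M$, $d_{\min}(B,C)\le d_{\min}(A,B)+d_{\min}(A,C)$; that is, $d_{\min}$ is a metric on the set $M/\!\sim_r$ of equivalence classes.
   Context: $\mathcal D$ is a finite subset of $\mathbb R_{\ge0}$ containing $0$. $\mathfrak U_{\mathcal D}$ is the class of countable homogeneous metric spaces (every isometry between finite subspaces extends to an isometry of the space onto itself) with distance set exactly $\mathcal D$ into which every finite metric space with distances in $\mathcal D$ embeds isometrically; $\mathcal D$ is universal if this class is nonempty. $x\sim_r y$ iff $d(x,y)\le r$ (an equivalence relation under the hypothesis on $r$). For $A,B\subseteq M$, $d_{\min}(A,B)=\min\{d(a,b):a\in A,b\in B\}$. *)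

theory Defs
  imports "HOL-Analysis.Analysis"
begin

definition metric_on :: "'a set \<Rightarrow> ('a \<Rightarrow> 'a \<Rightarrow> real) \<Rightarrow> bool" where
  "metric_on M d \<longleftrightarrow>
     (\<forall>x\<in>M. \<forall>y\<in>M. 0 \<le> d x y) \<and>
     (\<forall>x\<in>M. \<forall>y\<in>M. d x y = 0 \<longleftrightarrow> x = y) \<and>
     (\<forall>x\<in>M. \<forall>y\<in>M. d x y = d y x) \<and>
     (\<forall>x\<in>M. \<forall>y\<in>M. \<forall>z\<in>M. d x z \<le> d x y + d y z)"

definition dist_set :: "'a set \<Rightarrow> ('a \<Rightarrow> 'a \<Rightarrow> real) \<Rightarrow> real set" where
  "dist_set M d = {d x y | x y. x \<in> M \<and> y \<in> M}"

definition homogeneous :: "'a set \<Rightarrow> ('a \<Rightarrow> 'a \<Rightarrow> real) \<Rightarrow> bool" where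
  "homogeneous M d \<longleftrightarrow>
     (\<forall>A f. finite A \<and> A \<subseteq> M \<and> f ` A \<subseteq> M \<and>
            (\<forall>x\<in>A. \<forall>y\<in>A. d (f x) (f y) = d x y) \<longrightarrow>
        (\<exists>g. bij_betw g M M \<and> (\<forall>x\<in>M. \<forall>y\<in>M. d (g x) (g y) = d x y) \<and>
             (\<forall>x\<in>A. g x = f x)))"

text \<open>Every finite metric space with distances in D embeds isometrically into (M,d).
  Finite metric spaces are represented (up to isometry) on finite subsets of nat.\<close>
definition finitely_universal :: "real set \<Rightarrow> 'a set \<Rightarrow> ('a \<Rightarrow> 'a \<Rightarrow> real) \<Rightarrow> bool" where
  "finitely_universal D M d \<longleftrightarrow>
     (\<forall>(F::nat set) \<delta>. finite F \<and> metric_on F \<delta> \<and> (\<forall>x\<in>F. \<forall>y\<in>F. \<delta> x y \<in> D) \<longrightarrow>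
        (\<exists>e. e ` F \<subseteq> M \<and> (\<forall>x\<in>F. \<forall>y\<in>F. d (e x) (e y) = \<delta> x y)))"

definition in_U :: "real set \<Rightarrow> 'a set \<Rightarrow> ('a \<Rightarrow> 'a \<Rightarrow> real) \<Rightarrow> bool" where
  "in_U D M d \<longleftrightarrow> countable M \<and> metric_on M d \<and> homogeneous M d \<and>
     dist_set M d = D \<and> finitely_universal D M d"

text \<open>D is universal if U_D is nonempty (countable spaces can be taken on subsets of nat).\<close>
definition universal_dset :: "real set \<Rightarrow> bool" where
  "universal_dset D \<longleftrightarrow> (\<exists>(M::nat set) d. in_U D M d)"

definition r_class :: "'a set \<Rightarrow> ('a \<Rightarrow> 'a \<Rightarrow> real) \<Rightarrow> real \<Rightarrow> 'a \<Rightarrow> 'a set" where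
  "r_class M d r x = {y \<in> M. d x y \<le> r}"

definition r_classes :: "'a set \<Rightarrow> ('a \<Rightarrow> 'a \<Rightarrow> real) \<Rightarrow> real \<Rightarrow> 'a set set" where
  "r_classes M d r = r_class M d r ` M"

definition dmin :: "('a \<Rightarrow> 'a \<Rightarrow> real) \<Rightarrow> 'a set \<Rightarrow> 'a set \<Rightarrow> real" where
  "dmin d A B = Min {d a b | a b. a \<in> A \<and> b \<in> B}"

end

theory Submission imports Defs begin

text \<open>
  In a homogeneous space that is universal for finite metric spaces with
  distances in D, every one-point extension of a finite subspace is realised inside the
  space: embed the abstract extension somewhere, then move the embedded copy of the
  subspace back onto the given points by a global isometry.  Applied to the "rectangle"
  on four points (opposite pairs at equal distance), this says: for any a, a', b there is
  a point y with d a' y = d a b, d a y = d a' b and d b y = d a a'.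

  If no distance of D lies in (r, 2r], the triangle inequality makes d x y <= r
  transitive, so the r-classes are "r-balls around any of their members".  Given classes
  A, B, C, pick a in A, b in B realising dmin A B and a' in A, c in C realising dmin A C.
  The rectangle point y for a, a', b satisfies d b y = d a a' <= r, hence y lies in B,
  and d y c <= d y a' + d a' c = dmin A B + dmin A C.  Together with symmetry and
  definiteness of dmin this shows that dmin is a metric on the set of r-classes.
\<close>

lemma metric_on_nonneg: "metric_on M d \<Longrightarrow> x \<in> M \<Longrightarrow> y \<in> M \<Longrightarrow> 0 \<le> d x y"
  by (simp add: metric_on_def)

lemma metric_on_eq_0: "metric_on M d \<Longrightarrow> x \<in> M \<Longrightarrow> y \<in> M \<Longrightarrow> d x y = 0 \<longleftrightarrow> x = y"
  by (simp add: metric_on_def)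

lemma metric_on_sym: "metric_on M d \<Longrightarrow> x \<in> M \<Longrightarrow> y \<in> M \<Longrightarrow> d x y = d y x"
  by (simp add: metric_on_def)

lemma metric_on_triangle:
  "metric_on M d \<Longrightarrow> x \<in> M \<Longrightarrow> y \<in> M \<Longrightarrow> z \<in> M \<Longrightarrow> d x z \<le> d x y + d y z"
  by (simp add: metric_on_def)

section \<open>The rectangle metric on four points\<close>

text \<open>Points 0, 1, 2, 3 with d 0 1 = d 2 3 = u, d 0 2 = d 1 3 = s and d 1 2 = d 0 3 = t;
  for distinct points the side is determined by the index sum i + j.\<close>
definition rectangle :: "real \<Rightarrow> real \<Rightarrow> real \<Rightarrow> nat \<Rightarrow> nat \<Rightarrow> real" where
  "rectangle s t u i j =
     (if i = j then 0 else if i + j = 3 then t else if i + j = 2 \<or> i + j = 4 then s else u)"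

lemma atMost_3: "{..3::nat} = {0, 1, 2, 3}"
  by auto

lemma rectangle_metric:
  assumes "0 < s" "0 < t" "0 < u" "s \<le> t + u" "t \<le> s + u" "u \<le> s + t"
  shows "metric_on {..3} (rectangle s t u)"
  using assms unfolding metric_on_def atMost_3 by (simp add: rectangle_def)

section \<open>Homogeneous finitely universal spaces\<close>

locale homogeneous_universal =
  fixes M :: "'a set" and d :: "'a \<Rightarrow> 'a \<Rightarrow> real" and D :: "real set"
  assumes metric: "metric_on M d"
    and homogeneous: "homogeneous M d"
    and universal: "finitely_universal D M d"
    and distances_in_D: "dist_set M d \<subseteq> D"
begin

lemmas d_nonneg = metric_on_nonneg[OF metric]
  and d_eq_0 = metric_on_eq_0[OF metric]
  and d_sym = metric_on_sym[OF metric]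
  and d_triangle = metric_on_triangle[OF metric]

lemma d_in_D: "x \<in> M \<Longrightarrow> y \<in> M \<Longrightarrow> d x y \<in> D"
  using distances_in_D unfolding dist_set_def by blast

lemma one_point_extension:
  fixes \<delta> :: "nat \<Rightarrow> nat \<Rightarrow> real" and x :: "nat \<Rightarrow> 'a"
  assumes \<delta>_metric: "metric_on {..n} \<delta>" and \<delta>_in_D: "\<forall>i\<le>n. \<forall>j\<le>n. \<delta> i j \<in> D"
    and x_in_M: "\<forall>i<n. x i \<in> M" and x_iso: "\<forall>i<n. \<forall>j<n. d (x i) (x j) = \<delta> i j"
  shows "\<exists>y\<in>M. \<forall>i<n. d (x i) y = \<delta> i n"
proof -
  obtain e where e_in_M: "e ` {..n} \<subseteq> M" and e_iso: "\<forall>i\<le>n. \<forall>j\<le>n. d (e i) (e j) = \<delta> i j"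
    using universal[unfolded finitely_universal_def, rule_format, of "{..n}" \<delta>] \<delta>_metric \<delta>_in_D
    by auto
  have "inj_on e {..<n}"
  proof (rule inj_onI)
    fix i j assume "i \<in> {..<n}" "j \<in> {..<n}" "e i = e j"
    then have "i \<le> n" "j \<le> n" by auto
    then have "\<delta> i j = d (e i) (e j)" "\<delta> i i = d (e i) (e i)" using e_iso by auto
    then have "\<delta> i j = \<delta> i i" using \<open>e i = e j\<close> by simp
    then show "i = j"
      using metric_on_eq_0[OF \<delta>_metric, of i i] metric_on_eq_0[OF \<delta>_metric, of i j]
        \<open>i \<le> n\<close> \<open>j \<le> n\<close> by simp
  qed
  text \<open>Move the copy \<open>e ` {..<n}\<close> of the first n points back onto the given points.\<close>
  define f where "f = x \<circ> the_inv_into {..<n} e"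
  have f_e: "f (e i) = x i" if "i < n" for i
    using the_inv_into_f_f[OF \<open>inj_on e {..<n}\<close>] that unfolding f_def by simp
  have f_iso: "\<forall>p\<in>e ` {..<n}. \<forall>q\<in>e ` {..<n}. d (f p) (f q) = d p q"
    using x_iso e_iso f_e by auto
  have "e ` {..<n} \<subseteq> M" "f ` e ` {..<n} \<subseteq> M"
    using e_in_M x_in_M f_e by auto
  then obtain g where g_M: "bij_betw g M M" and g_iso: "\<forall>p\<in>M. \<forall>q\<in>M. d (g p) (g q) = d p q"
    and g_f: "\<forall>p\<in>e ` {..<n}. g p = f p"
    using homogeneous[unfolded homogeneous_def, rule_format, of "e ` {..<n}" f] f_iso by blast
  have e_n: "e n \<in> M" using e_in_M by auto
  show ?thesis
  proof (intro bexI allI impI)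
    show "g (e n) \<in> M" using g_M e_n by (auto simp: bij_betw_def)
    fix i assume "i < n"
    then have "e i \<in> M" "x i = g (e i)" using e_in_M g_f f_e by auto
    then have "d (x i) (g (e n)) = d (e i) (e n)" using g_iso e_n by simp
    then show "d (x i) (g (e n)) = \<delta> i n" using e_iso \<open>i < n\<close> by simp
  qed
qed

text \<open>Rectangle completion for three distinct points: the four-point rectangle with sides
  d a b, d a' b, d a a' is a metric with distances in D, so its fourth vertex is realised.\<close>
lemma rectangle_completion_distinct:
  assumes a: "a \<in> M" and a': "a' \<in> M" and b: "b \<in> M"
    and distinct: "a \<noteq> a'" "a \<noteq> b" "a' \<noteq> b"
  shows "\<exists>y\<in>M. d a' y = d a b \<and> d a y = d a' b \<and> d b y = d a a'"
proof -
  define s where "s = d a b"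
  define t where "t = d a' b"
  define u where "u = d a a'"
  have "0 < s" "0 < t" "0 < u"
    using distinct d_nonneg[OF a b] d_nonneg[OF a' b] d_nonneg[OF a a']
      d_eq_0[OF a b] d_eq_0[OF a' b] d_eq_0[OF a a'] unfolding s_def t_def u_def by auto
  moreover have "s \<le> t + u" "t \<le> s + u" "u \<le> s + t"
    using d_triangle[OF a a' b] d_triangle[OF a' a b] d_triangle[OF a b a']
      d_sym[OF a a'] d_sym[OF a' b] unfolding s_def t_def u_def by linarith+
  ultimately have rect: "metric_on {..3} (rectangle s t u)"
    using rectangle_metric by blast
  have "rectangle s t u i j \<in> {0, s, t, u}" for i j
    unfolding rectangle_def by auto
  moreover have "{0, s, t, u} \<subseteq> D"
    using d_in_D[OF a a] d_eq_0[OF a a] d_in_D[OF a b] d_in_D[OF a' b] d_in_D[OF a a']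
    unfolding s_def t_def u_def by auto
  ultimately have rect_D: "\<forall>i\<le>3. \<forall>j\<le>3. rectangle s t u i j \<in> D" by blast
  text \<open>The given points a, a', b are the vertices 0, 1, 2 of the rectangle.\<close>
  define x where "x i = (if i = 0 then a else if i = 1 then a' else b)" for i :: nat
  have below_3: "i < 3 \<longleftrightarrow> i = 0 \<or> i = 1 \<or> i = 2" for i :: nat by auto
  have "\<forall>i<3. x i \<in> M" using a a' b unfolding x_def below_3 by auto
  moreover have "\<forall>i<3. \<forall>j<3. d (x i) (x j) = rectangle s t u i j"
    using d_eq_0[OF a a] d_eq_0[OF a' a'] d_eq_0[OF b b] d_sym[OF a a'] d_sym[OF a b] d_sym[OF a' b]
    unfolding below_3 x_def rectangle_def s_def t_def u_def by simp
  ultimately obtain y where "y \<in> M" and y: "\<forall>i<3. d (x i) y = rectangle s t u i 3"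
    using one_point_extension[OF rect rect_D] by blast
  moreover have "d a y = t" "d a' y = s" "d b y = u"
    using y[rule_format, of 0] y[rule_format, of 1] y[rule_format, of 2]
    by (simp_all add: x_def rectangle_def)
  ultimately show ?thesis unfolding s_def t_def u_def by blast
qed

text \<open>If two of the
  three points coincide, one of them serves as y.\<close>
lemma rectangle_completion:
  assumes a: "a \<in> M" and a': "a' \<in> M" and b: "b \<in> M"
  shows "\<exists>y\<in>M. d a' y = d a b \<and> d a y = d a' b \<and> d b y = d a a'"
proof (cases "a = a' \<or> a = b \<or> a' = b")
  case True
  then show ?thesis
  proof (elim disjE)
    assume "a = a'" then show ?thesis using d_eq_0[OF a' a'] d_eq_0[OF b b] b by auto
  next
    assume "a = b" then show ?thesis using d_eq_0[OF a a] d_eq_0[OF a' a'] d_sym[OF a a'] a' by auto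
  next
    assume "a' = b" then show ?thesis using d_eq_0[OF a a] d_eq_0[OF a' a'] d_sym[OF a a'] a by auto
  qed
next
  case False
  then show ?thesis using rectangle_completion_distinct[OF a a' b] by blast
qed

end

section \<open>r-classes in a space without distances in (r, 2r]\<close>

text \<open>The setting of the theorem: additionally D is finite (so minimal distances exist) and
  contains no distance in (r, 2r].\<close>
locale gapped_space = homogeneous_universal +
  fixes r :: real
  assumes finite_D: "finite D"
    and r_nonneg: "0 \<le> r"
    and gap: "{r<..2*r} \<inter> D = {}"
begin

text \<open>The gap makes "within distance r" transitive, so \<open>\<sim>\<^sub>r\<close> is an equivalence.\<close>
lemma within_r_trans:
  assumes "x \<in> M" "y \<in> M" "z \<in> M" "d x y \<le> r" "d y z \<le> r"
  shows "d x z \<le> r"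
proof -
  have "d x z \<le> 2 * r" using d_triangle[of x y z] assms by linarith
  moreover have "d x z \<notin> {r<..2*r}" using d_in_D[of x z] gap assms by blast
  ultimately show ?thesis by auto
qed

lemma r_class_iff: "y \<in> r_class M d r x \<longleftrightarrow> y \<in> M \<and> d x y \<le> r"
  by (simp add: r_class_def)

lemma r_classE:
  assumes "A \<in> r_classes M d r"
  obtains x where "x \<in> M" "A = r_class M d r x"
  using assms unfolding r_classes_def by blast

lemma r_class_subset: "A \<in> r_classes M d r \<Longrightarrow> A \<subseteq> M"
  by (auto elim: r_classE simp: r_class_iff)

lemma r_class_nonempty:
  assumes "A \<in> r_classes M d r"
  shows "A \<noteq> {}"
proof -
  obtain x where x: "x \<in> M" "A = r_class M d r x" using assms by (rule r_classE)
  then have "x \<in> A" using d_eq_0[OF x(1) x(1)] r_nonneg by (simp add: r_class_iff)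
  then show ?thesis by blast
qed

lemma r_class_close:
  assumes "A \<in> r_classes M d r" "a \<in> A" "b \<in> A"
  shows "d a b \<le> r"
proof -
  obtain x where x: "x \<in> M" "A = r_class M d r x" using assms(1) by (rule r_classE)
  then have "a \<in> M" "b \<in> M" "d a x \<le> r" "d x b \<le> r"
    using assms(2,3) d_sym[of x a] by (auto simp: r_class_iff)
  then show ?thesis using within_r_trans x(1) by blast
qed

lemma r_class_closed:
  assumes "A \<in> r_classes M d r" "a \<in> A" "b \<in> M" "d a b \<le> r"
  shows "b \<in> A"
proof -
  obtain x where x: "x \<in> M" "A = r_class M d r x" using assms(1) by (rule r_classE)
  then have "a \<in> M" "d x a \<le> r" using assms(2) by (auto simp: r_class_iff)
  then show ?thesis using within_r_trans[of x a b] x assms(3,4) by (auto simp: r_class_iff)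
qed

lemma r_classes_eq:
  assumes "A \<in> r_classes M d r" "B \<in> r_classes M d r" "a \<in> A" "a \<in> B"
  shows "A = B"
proof (intro equalityI subsetI)
  fix b assume "b \<in> A"
  then show "b \<in> B"
    using r_class_closed[OF assms(2,4)] r_class_close[OF assms(1,3)] r_class_subset[OF assms(1)]
    by blast
next
  fix b assume "b \<in> B"
  then show "b \<in> A"
    using r_class_closed[OF assms(1,3)] r_class_close[OF assms(2,4)] r_class_subset[OF assms(2)]
    by blast
qed

section \<open>The minimal distance between subsets\<close>

text \<open>Between subsets of M only finitely many distances occur, as all lie in the finite D;
  so \<open>dmin\<close> is a genuine minimum, attained and below every distance.\<close>
lemma finite_distances:
  assumes "A \<subseteq> M" "B \<subseteq> M"
  shows "finite {d a b | a b. a \<in> A \<and> b \<in> B}"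
  using finite_D by (rule finite_subset[rotated]) (use assms d_in_D in blast)

lemma dmin_le:
  assumes "A \<subseteq> M" "B \<subseteq> M" "a \<in> A" "b \<in> B"
  shows "dmin d A B \<le> d a b"
  unfolding dmin_def using finite_distances[OF assms(1,2)] assms(3,4) by (intro Min_le) auto

lemma dmin_attained:
  assumes "A \<subseteq> M" "B \<subseteq> M" "A \<noteq> {}" "B \<noteq> {}"
  obtains a b where "a \<in> A" "b \<in> B" "dmin d A B = d a b"
proof -
  have "dmin d A B \<in> {d a b | a b. a \<in> A \<and> b \<in> B}"
    unfolding dmin_def using finite_distances[OF assms(1,2)] assms(3,4) by (intro Min_in) auto
  then show ?thesis using that by blast
qed

lemma dmin_sym:
  assumes "A \<subseteq> M" "B \<subseteq> M"
  shows "dmin d A B = dmin d B A"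
proof -
  have "{d a b | a b. a \<in> A \<and> b \<in> B} \<subseteq> {d b a | b a. b \<in> B \<and> a \<in> A}"
    if "A \<subseteq> M" "B \<subseteq> M" for A B
  proof
    fix v assume "v \<in> {d a b | a b. a \<in> A \<and> b \<in> B}"
    then obtain a b where "v = d a b" "a \<in> A" "b \<in> B" by blast
    moreover have "d a b = d b a" using d_sym that \<open>a \<in> A\<close> \<open>b \<in> B\<close> by blast
    ultimately show "v \<in> {d b a | b a. b \<in> B \<and> a \<in> A}" by blast
  qed
  then have "{d a b | a b. a \<in> A \<and> b \<in> B} = {d b a | b a. b \<in> B \<and> a \<in> A}"
    using assms by (intro equalityI) auto
  then show ?thesis unfolding dmin_def by simp
qed

text \<open>The main step: the rectangle point y for a, a', b lies in the class of b, because
  d b y = d a a' <= r, and it is as far from a' as b is from a.\<close>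
lemma dmin_triangle_classes:
  assumes A: "A \<in> r_classes M d r" and B: "B \<in> r_classes M d r" and C: "C \<in> r_classes M d r"
  shows "dmin d B C \<le> dmin d A B + dmin d A C"
proof -
  note sub = r_class_subset[OF A] r_class_subset[OF B] r_class_subset[OF C]
  note ne = r_class_nonempty[OF A] r_class_nonempty[OF B] r_class_nonempty[OF C]
  obtain a b where a: "a \<in> A" and b: "b \<in> B" and ab: "dmin d A B = d a b"
    using dmin_attained[of A B] sub ne by blast
  obtain a' c where a': "a' \<in> A" and c: "c \<in> C" and a'c: "dmin d A C = d a' c"
    using dmin_attained[of A C] sub ne by blast
  have in_M: "a \<in> M" "a' \<in> M" "b \<in> M" "c \<in> M" using a a' b c sub by auto
  obtain y where "y \<in> M" and y_a': "d a' y = d a b" and y_b: "d b y = d a a'"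
    using rectangle_completion[OF in_M(1-3)] by blast
  have "y \<in> B"
    using r_class_closed[OF B b \<open>y \<in> M\<close>] y_b r_class_close[OF A a a'] by simp
  then have "dmin d B C \<le> d y c" using dmin_le sub c by blast
  also have "\<dots> \<le> d y a' + d a' c" using d_triangle \<open>y \<in> M\<close> in_M by blast
  also have "\<dots> = dmin d A B + dmin d A C" using ab a'c y_a' d_sym[of y a'] \<open>y \<in> M\<close> in_M by simp
  finally show ?thesis .
qed

text \<open>Definiteness uses that distinct classes are disjoint; the triangle inequality is
  the previous lemma combined with symmetry.\<close>
lemma dmin_metric_on_classes: "metric_on (r_classes M d r) (dmin d)"
  unfolding metric_on_def
proof (intro conjI ballI)
  fix A B assume A: "A \<in> r_classes M d r" and B: "B \<in> r_classes M d r"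
  note sub = r_class_subset[OF A] r_class_subset[OF B]
  obtain a b where a: "a \<in> A" and b: "b \<in> B" and ab: "dmin d A B = d a b"
    using dmin_attained[of A B] sub r_class_nonempty[OF A] r_class_nonempty[OF B] by blast
  have in_M: "a \<in> M" "b \<in> M" using a b sub by auto
  show "0 \<le> dmin d A B" using ab d_nonneg[OF in_M] by simp
  show "dmin d A B = dmin d B A" using dmin_sym[OF sub] .
  show "dmin d A B = 0 \<longleftrightarrow> A = B"
  proof
    assume "dmin d A B = 0"
    then have "a = b" using ab d_eq_0[OF in_M] by simp
    then show "A = B" using r_classes_eq[OF A B a] b by simp
  next
    assume "A = B"
    then have "dmin d A B \<le> d a a" using dmin_le[OF sub a] a by simp
    then show "dmin d A B = 0" using d_eq_0[of a a] in_M ab d_nonneg[OF in_M] by simp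
  qed
next
  fix A B C
  assume "A \<in> r_classes M d r" "B \<in> r_classes M d r" "C \<in> r_classes M d r"
  then show "dmin d A C \<le> dmin d A B + dmin d B C"
    using dmin_triangle_classes[of B A C] dmin_sym[of A B] r_class_subset by simp
qed

end

theorem lemma3p3:
  fixes D :: "real set" and M :: "'a set" and d :: "'a \<Rightarrow> 'a \<Rightarrow> real" and r :: real
  assumes "finite D" and "0 \<in> D" and "\<forall>x\<in>D. 0 \<le> x"
    and "universal_dset D"
    and "in_U D M d"
    and "r \<in> D" and "0 < r" and "{r<..2*r} \<inter> D = {}"
  shows "(\<forall>A\<in>r_classes M d r. \<forall>B\<in>r_classes M d r. \<forall>C\<in>r_classes M d r.
            dmin d B C \<le> dmin d A B + dmin d A C)
         \<and> metric_on (r_classes M d r) (dmin d)"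
proof -
  interpret gapped_space M d D r
    using assms unfolding in_U_def by unfold_locales auto
  show ?thesis using dmin_triangle_classes dmin_metric_on_classes by blast
qed

end
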